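(* Let $R>0$ and let $f\colon\mathbb{R}\to(0,\infty)$ be a continuously differentiable convex function. Put $\alpha(t)=\dfrac{tf'(t)-f(t)}{\sqrt{1+f'(t)^2}}$ and $C^+=\{t>0\mid\alpha(t)\ge R\}$. Then either $C^+=\emptyset$, or $t_0^+:=\inf C^+>0$ and $C^+=[t_0^+,\infty)$. *)

theory Defs
  imports "HOL-Analysis.Analysis"
begin

end

theory Submission
  imports Defs
begin

text \<open>
  The quantity \<open>\<alpha> t\<close> is the signed distance from the origin to the tangent line of the graph
  of \<open>f\<close> at \<open>(t, f t)\<close>, positive when the tangent passes below the origin.
  Once \<open>\<alpha> s \<ge> 0\<close> at some \<open>s > 0\<close>, the slope \<open>f' s\<close> is nonnegative, and moving to the right
  convexity only increases the slope and lowers the intercept \<open>f t - t * f' t\<close>; both move the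
  tangent away from the origin, so \<open>\<alpha>\<close> is nondecreasing from \<open>s\<close> on.  Since \<open>\<alpha> 0 < 0\<close> and
  \<open>\<alpha>\<close> is continuous, \<open>C\<^sup>+\<close> is a closed up-closed set of positive reals containing its
  infimum.
\<close>

definition tangent_distance :: "(real \<Rightarrow> real) \<Rightarrow> (real \<Rightarrow> real) \<Rightarrow> real \<Rightarrow> real" where
  "tangent_distance f f' t = (t * f' t - f t) / sqrt (1 + (f' t)\<^sup>2)"

lemma sqrt_one_plus_power2_pos: "sqrt (1 + x\<^sup>2) > (0::real)"
  by (simp add: add_pos_nonneg)

lemma divide_sqrt_one_plus_power2_mono:
  fixes a b s c :: real
  assumes "0 \<le> a" "a \<le> b" "0 \<le> s" "0 \<le> c"
  shows "(s * a - c) / sqrt (1 + a\<^sup>2) \<le> (s * b - c) / sqrt (1 + b\<^sup>2)"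
proof -
  define x y where "x = sqrt (1 + a\<^sup>2)" and "y = sqrt (1 + b\<^sup>2)"
  have "x > 0" "y > 0"
    unfolding x_def y_def by (rule sqrt_one_plus_power2_pos)+
  have "a\<^sup>2 \<le> b\<^sup>2" using assms by (intro power_mono) auto
  hence "x \<le> y" unfolding x_def y_def by simp
  have squares: "x\<^sup>2 = 1 + a\<^sup>2" "y\<^sup>2 = 1 + b\<^sup>2"
    unfolding x_def y_def by (simp_all add: add_nonneg_nonneg)
  have "(a * y)\<^sup>2 \<le> (b * x)\<^sup>2"
    using \<open>a\<^sup>2 \<le> b\<^sup>2\<close> unfolding power_mult_distrib squares by (simp add: algebra_simps)
  moreover have "0 \<le> b * x"
    using assms \<open>x > 0\<close> by simp
  ultimately have "a * y \<le> b * x"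
    by (rule power2_le_imp_le)
  hence "(s * a - c) * y \<le> (s * b - c) * x"
    using \<open>x \<le> y\<close> assms mult_left_mono[of "a * y" "b * x" s] mult_left_mono[of x y c]
    by (simp add: algebra_simps)
  thus ?thesis
    using \<open>x > 0\<close> \<open>y > 0\<close> unfolding x_def y_def by (simp add: divide_simps)
qed

lemma convex_on_UNIV_above_tangent:
  fixes f f' :: "real \<Rightarrow> real"
  assumes "convex_on UNIV f" and "\<And>t. (f has_real_derivative f' t) (at t)"
  shows "f x - f c \<ge> f' c * (x - c)"
  using assms by (intro convex_on_imp_above_tangent) auto

lemma convex_on_UNIV_deriv_mono:
  fixes f f' :: "real \<Rightarrow> real"
  assumes convex: "convex_on UNIV f" and deriv: "\<And>t. (f has_real_derivative f' t) (at t)"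
    and "s \<le> t"
  shows "f' s \<le> f' t"
proof -
  have "(f' t - f' s) * (t - s) \<ge> 0"
    using convex_on_UNIV_above_tangent[OF convex deriv, of t s]
      convex_on_UNIV_above_tangent[OF convex deriv, of s t]
    by (simp add: algebra_simps)
  thus ?thesis using \<open>s \<le> t\<close> by (cases "s = t") (auto simp: zero_le_mult_iff)
qed

lemma tangent_distance_mono:
  fixes f f' :: "real \<Rightarrow> real"
  assumes convex: "convex_on UNIV f" and deriv: "\<And>t. (f has_real_derivative f' t) (at t)"
    and "f s \<ge> 0" "0 < s" "s \<le> t" "tangent_distance f f' s \<ge> 0"
  shows "tangent_distance f f' s \<le> tangent_distance f f' t"
proof -
  have "s * f' s - f s \<ge> 0"
    using assms(6) sqrt_one_plus_power2_pos[of "f' s"]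
    by (simp add: tangent_distance_def zero_le_divide_iff)
  hence "s * f' s \<ge> 0"
    using \<open>f s \<ge> 0\<close> by linarith
  hence "f' s \<ge> 0"
    using \<open>0 < s\<close> by (simp add: zero_le_mult_iff)
  have "f' s \<le> f' t"
    using convex_on_UNIV_deriv_mono[OF convex deriv \<open>s \<le> t\<close>] .
  have intercept: "s * f' t - f s \<le> t * f' t - f t"
    using convex_on_UNIV_above_tangent[OF convex deriv, of t s] by (simp add: algebra_simps)
  have "tangent_distance f f' s \<le> (s * f' t - f s) / sqrt (1 + (f' t)\<^sup>2)"
    unfolding tangent_distance_def
    using \<open>f' s \<ge> 0\<close> \<open>f' s \<le> f' t\<close> \<open>0 < s\<close> \<open>f s \<ge> 0\<close> by (intro divide_sqrt_one_plus_power2_mono) auto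
  also have "\<dots> \<le> tangent_distance f f' t"
    unfolding tangent_distance_def
    using intercept sqrt_one_plus_power2_pos[of "f' t"] by (intro divide_right_mono) auto
  finally show ?thesis .
qed

lemma closed_positive_superlevel_set:
  fixes g :: "real \<Rightarrow> real"
  assumes "continuous_on UNIV g" "g 0 < R"
  shows "closed {t. t > 0 \<and> g t \<ge> R}"
proof -
  have "{t. t > 0 \<and> g t \<ge> R} = {0..} \<inter> {t. R \<le> g t}"
    using assms(2) by (auto simp: less_eq_real_def)
  thus ?thesis
    using assms(1) by (simp add: closed_Collect_le closed_Int continuous_on_const)
qed

lemma closed_upward_closed_eq_atLeast_Inf:
  fixes S :: "real set"
  assumes "S \<noteq> {}" "closed S" "bdd_below S" "\<And>s t. s \<in> S \<Longrightarrow> s \<le> t \<Longrightarrow> t \<in> S"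
  shows "S = {Inf S..}"
  using closed_contains_Inf[OF assms(1,3,2)] assms(3,4) by (auto intro: cInf_lower)

theorem corollary9:
  fixes f f' :: "real \<Rightarrow> real" and R :: real
  assumes R_pos: "R > 0"
    and f_pos: "\<And>t. f t > 0"
    and f_deriv: "\<And>t. (f has_real_derivative f' t) (at t)"
    and f'_cont: "continuous_on UNIV f'"
    and f_convex: "convex_on UNIV f"
  defines "\<alpha> \<equiv> (\<lambda>t. (t * f' t - f t) / sqrt (1 + (f' t)\<^sup>2))"
  defines "Cplus \<equiv> {t. t > 0 \<and> \<alpha> t \<ge> R}"
  shows "Cplus = {} \<or> (Inf Cplus > 0 \<and> Cplus = {Inf Cplus..})"
proof (cases "Cplus = {}")
  case False
  have \<alpha>: "\<alpha> = tangent_distance f f'"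
    unfolding \<alpha>_def tangent_distance_def ..
  have "continuous_on UNIV f"
    using f_deriv by (meson DERIV_continuous continuous_at_imp_continuous_on)
  hence \<alpha>_cont: "continuous_on UNIV \<alpha>"
    unfolding \<alpha>_def using f'_cont sqrt_one_plus_power2_pos
    by (intro continuous_intros) (auto simp: less_le)
  have "\<alpha> 0 < 0"
    using f_pos[of 0] sqrt_one_plus_power2_pos[of "f' 0"] unfolding \<alpha>_def by (simp add: divide_neg_pos)
  hence "closed Cplus"
    unfolding Cplus_def using \<alpha>_cont R_pos by (intro closed_positive_superlevel_set) auto
  have bdd: "bdd_below Cplus"
    unfolding Cplus_def by (auto intro: bdd_belowI[of _ 0])
  have "s \<in> Cplus \<Longrightarrow> s \<le> t \<Longrightarrow> t \<in> Cplus" for s t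
    using tangent_distance_mono[OF f_convex f_deriv, of s t] f_pos[of s] R_pos
    unfolding Cplus_def \<alpha> by force
  hence "Cplus = {Inf Cplus..}"
    using closed_upward_closed_eq_atLeast_Inf[OF False \<open>closed Cplus\<close> bdd] by blast
  moreover have "Inf Cplus > 0"
    using closed_contains_Inf[OF False bdd \<open>closed Cplus\<close>] unfolding Cplus_def by auto
  ultimately show ?thesis by simp
qed simp

end
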